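(* Let $\mathbb{F}$ be a finite field and $n\ge2$. Let $j_1,\dots,j_{n-1}\in\{1,\dots,n\}$ be pairwise different and $d_1,\dots,d_{n-1}\in\mathbb{N}_0$ be such that $j_i<i$ implies $d_i>0$. Then there exists a basic matrix $M=(m_{ij})\in\mathbb{F}[t]^{(n-1)\times n}$ with the following properties, for all $i=1,\dots,n-1$: (i) $\deg m_{ij}\le d_i$ for $j<j_i$; (ii) $\deg m_{ij}=d_i$ for $j=j_i$; (iii) $\deg m_{ij}<d_i$ for $j>j_i$; (iv) $m_{ii}(0)=1$; (v) $m_{ij}(0)=0$ for $j<i$.
   Context: A matrix $M\in\mathbb{F}[t]^{k\times n}$ is basic if $\mathrm{rank}\,M(\lambda)=k$ for all $\lambda$ in an algebraic closure of $\mathbb{F}$, equivalently its $k\times k$ minors are coprime. $\deg 0=-\infty$. *)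

theory Defs
  imports "HOL-Computational_Algebra.Polynomial"
    "Jordan_Normal_Form.Determinant" "Jordan_Normal_Form.DL_Submatrix"
begin

definition basic_mat :: "'a::comm_ring_1 mat \<Rightarrow> bool" where
  "basic_mat M \<longleftrightarrow>
     (\<forall>p. (\<forall>J. J \<subseteq> {..<dim_col M} \<and> card J = dim_row M \<longrightarrow>
               p dvd det (submatrix M {..<dim_row M} J)) \<longrightarrow> p dvd 1)"

end

theory Submission
  imports Defs "HOL-Library.Product_Lexorder" "HOL-Combinatorics.Orbits"
begin

text \<open>Extend \<open>j\<close> to a permutation of the columns \<open>{1..n}\<close> by sending \<open>n\<close> to the column it misses.
  Row \<open>i\<close> of the matrix is \<open>t\<^sup>d\<^sup>i e\<^bsub>j i\<^esub> + e\<^sub>i\<close>, and in addition the largest element of every cycle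
  avoiding \<open>n\<close> gets a \<open>1\<close> in the column of the next anchor above it, where the anchors are \<open>n\<close> and
  these cycle tops. Each row then has a pivot entry \<open>1\<close> (at the next anchor for a cycle top, on the
  diagonal otherwise), and the pivots occupy every column except the smallest anchor. Weight a column
  by the first anchor met when following the permutation and the number of steps needed: in every
  row the pivot is the unique heaviest nonzero entry. So in the maximal minor omitting the smallest
  anchor only the pivot permutation contributes, the minor is \<open>\<plusminus>1\<close>, and the matrix is basic.\<close>

lemma permutes_eq_if_dominated:
  fixes w :: "'a \<Rightarrow> 'b::linorder"
  assumes "finite S" and p: "p permutes S" and p0: "p0 permutes S"
    and dominated: "\<And>i. i \<in> S \<Longrightarrow> p i \<noteq> p0 i \<Longrightarrow> w (p i) < w (p0 i)"
  shows "p = p0"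
proof (rule ccontr)
  assume "p \<noteq> p0"
  define D where "D = {i \<in> S. p i \<noteq> p0 i}"
  have "D \<noteq> {}"
    using \<open>p \<noteq> p0\<close> permutes_not_in[OF p] permutes_not_in[OF p0] unfolding D_def by fastforce
  moreover have "finite D" using \<open>finite S\<close> unfolding D_def by simp
  ultimately have "Max ((\<lambda>i. w (p0 i)) ` D) \<in> (\<lambda>i. w (p0 i)) ` D" by simp
  then obtain i0 where i0: "i0 \<in> D" and "w (p0 i0) = Max ((\<lambda>i. w (p0 i)) ` D)"
    by (rule imageE) simp
  with \<open>finite D\<close> have max: "\<And>i. i \<in> D \<Longrightarrow> w (p0 i) \<le> w (p0 i0)" by simp
  have "p0 i0 \<in> p ` S" using i0 p0 p unfolding D_def by (simp add: permutes_in_image permutes_image)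
  then obtain i1 where "i1 \<in> S" and "p i1 = p0 i0" by auto
  \<comment> \<open>The element that p sends to p0 i0 deviates as well, and has a strictly heavier p0-image.\<close>
  have "i1 \<noteq> i0" using i0 \<open>p i1 = p0 i0\<close> unfolding D_def by auto
  hence "p i1 \<noteq> p0 i1" using \<open>p i1 = p0 i0\<close> permutes_inj[OF p0] by (simp add: inj_eq)
  with \<open>i1 \<in> S\<close> have "i1 \<in> D" and "w (p0 i0) < w (p0 i1)"
    using dominated[of i1] \<open>p i1 = p0 i0\<close> unfolding D_def by auto
  with max show False by (meson leD)
qed

lemma det_eq_dominant_perm:
  fixes A :: "'a::comm_ring_1 mat" and w :: "nat \<Rightarrow> 'b::linorder"
  assumes A: "A \<in> carrier_mat m m" and p0: "p0 permutes {0..<m}"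
    and dominant: "\<And>i k. i < m \<Longrightarrow> k < m \<Longrightarrow> A $$ (i, k) \<noteq> 0 \<Longrightarrow> k \<noteq> p0 i \<Longrightarrow> w k < w (p0 i)"
  shows "det A = signof p0 * (\<Prod>i = 0..<m. A $$ (i, p0 i))"
proof -
  let ?term = "\<lambda>p. signof p * (\<Prod>i = 0..<m. A $$ (i, p i))"
  have "?term p = 0" if p: "p permutes {0..<m}" and "p \<noteq> p0" for p
  proof -
    have "\<exists>i\<in>{0..<m}. A $$ (i, p i) = 0"
    proof (rule ccontr)
      assume nonzero: "\<not> ?thesis"
      have "p = p0"
      proof (rule permutes_eq_if_dominated[OF _ p p0, where w = w])
        fix i assume "i \<in> {0..<m}" "p i \<noteq> p0 i"
        thus "w (p i) < w (p0 i)" using dominant[of i "p i"] nonzero permutes_in_image[OF p] by simp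
      qed simp
      with \<open>p \<noteq> p0\<close> show False ..
    qed
    hence "(\<Prod>i = 0..<m. A $$ (i, p i)) = 0" by (rule prod_zero[rotated]) simp
    thus ?thesis by simp
  qed
  hence "(\<Sum>p \<in> {p. p permutes {0..<m}} - {p0}. ?term p) = 0" by (intro sum.neutral) auto
  moreover have "det A = ?term p0 + (\<Sum>p \<in> {p. p permutes {0..<m}} - {p0}. ?term p)"
    unfolding det_def'[OF A] using p0 by (subst sum.remove[of _ p0]) (auto simp: finite_permutations)
  ultimately show ?thesis by simp
qed

lemma submatrix_all_rows:
  fixes A :: "'a mat"
  assumes A: "A \<in> carrier_mat m n" and J: "J \<subseteq> {..<n}" "card J = m"
  shows "submatrix A {..<m} J \<in> carrier_mat m m"
    and "\<And>i b. i < m \<Longrightarrow> b < m \<Longrightarrow> submatrix A {..<m} J $$ (i, b) = A $$ (i, pick J b)"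
proof -
  have rows: "{i. i < dim_row A \<and> i \<in> {..<m}} = {..<m}" and cols: "{k. k < dim_col A \<and> k \<in> J} = J"
    using A J by auto
  have "dim_row (submatrix A {..<m} J) = m" "dim_col (submatrix A {..<m} J) = m"
    unfolding dim_submatrix rows cols using J(2) by simp_all
  thus "submatrix A {..<m} J \<in> carrier_mat m m" by blast
  fix i b assume "i < m" "b < m"
  have "{a \<in> {..<m}. a < i} = {..<i}" using \<open>i < m\<close> by auto
  hence "pick {..<m} i = i" using pick_card_in_set[of i "{..<m}"] \<open>i < m\<close> by simp
  moreover have "submatrix A {..<m} J $$ (i, b) = A $$ (pick {..<m} i, pick J b)"
    by (rule submatrix_index) (simp_all only: rows cols J(2) \<open>i < m\<close> \<open>b < m\<close> card_lessThan)
  ultimately show "submatrix A {..<m} J $$ (i, b) = A $$ (i, pick J b)" by simp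
qed

text \<open>\<open>card {c \<in> J. c < k}\<close> is the position of \<open>k \<in> J\<close> in \<open>J\<close>, inverse to \<open>pick J\<close>.\<close>
lemma permutes_position_of_injection:
  fixes J :: "nat set"
  assumes J: "finite J" "card J = m" and \<pi>: "inj_on \<pi> {..<m}" "\<pi> ` {..<m} \<subseteq> J"
  shows "(\<lambda>i. if i < m then card {c \<in> J. c < \<pi> i} else i) permutes {0..<m}"
    (is "?p permutes _")
proof (rule bij_imp_permutes)
  have "inj_on ?p {0..<m}"
  proof (rule inj_onI)
    fix x y assume "x \<in> {0..<m}" "y \<in> {0..<m}" "?p x = ?p y"
    hence "pick J (card {c \<in> J. c < \<pi> x}) = pick J (card {c \<in> J. c < \<pi> y})" by simp
    moreover have "\<pi> x \<in> J" "\<pi> y \<in> J" using \<open>x \<in> {0..<m}\<close> \<open>y \<in> {0..<m}\<close> \<pi>(2) by auto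
    ultimately have "\<pi> x = \<pi> y" by (simp add: pick_card_in_set)
    thus "x = y" using \<open>x \<in> {0..<m}\<close> \<open>y \<in> {0..<m}\<close> \<pi>(1) by (auto dest: inj_onD)
  qed
  moreover have "card {c \<in> J. c < k} < m" if "k \<in> J" for k
  proof -
    have "{c \<in> J. c < k} \<subset> J" using that by auto
    thus ?thesis unfolding J(2)[symmetric] using J(1) by (rule psubset_card_mono[rotated])
  qed
  hence "?p ` {0..<m} \<subseteq> {0..<m}" using \<pi>(2) by (auto simp: image_subset_iff)
  ultimately show "bij_betw ?p {0..<m} {0..<m}"
    unfolding bij_betw_def using endo_inj_surj[of "{0..<m}" ?p] by blast
qed simp

lemma det_submatrix_eq_dominant_injection:
  fixes A :: "'a::comm_ring_1 mat" and w :: "nat \<Rightarrow> 'b::linorder"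
  assumes A: "A \<in> carrier_mat m n" and J: "J \<subseteq> {..<n}" "card J = m"
    and \<pi>: "inj_on \<pi> {..<m}" "\<pi> ` {..<m} \<subseteq> J"
    and dominant: "\<And>i k. i < m \<Longrightarrow> k \<in> J \<Longrightarrow> A $$ (i, k) \<noteq> 0 \<Longrightarrow> k \<noteq> \<pi> i \<Longrightarrow> w k < w (\<pi> i)"
  shows "\<exists>p. p permutes {0..<m} \<and> det (submatrix A {..<m} J) = signof p * (\<Prod>i = 0..<m. A $$ (i, \<pi> i))"
proof -
  define p where "p i = (if i < m then card {c \<in> J. c < \<pi> i} else i)" for i
  let ?B = "submatrix A {..<m} J"
  note B = submatrix_all_rows[OF A J]
  have "finite J" using J(1) finite_subset by blast
  hence p: "p permutes {0..<m}" unfolding p_def using J(2) \<pi> by (rule permutes_position_of_injection)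
  have pick_p: "pick J (p i) = \<pi> i" if "i < m" for i
    using that \<pi>(2) pick_card_in_set unfolding p_def by auto
  have "det ?B = signof p * (\<Prod>i = 0..<m. ?B $$ (i, p i))"
  proof (rule det_eq_dominant_perm[OF B(1) p, where w = "\<lambda>b. w (pick J b)"])
    fix i b assume "i < m" "b < m" "?B $$ (i, b) \<noteq> 0" "b \<noteq> p i"
    have "card {c \<in> J. c < pick J b} = b" using card_pick[of b J] \<open>b < m\<close> J(2) by simp
    hence "pick J b \<noteq> \<pi> i" using \<open>b \<noteq> p i\<close> \<open>i < m\<close> unfolding p_def by auto
    moreover have "pick J b \<in> J" using pick_in_set[of b J] \<open>b < m\<close> J(2) by simp
    moreover have "A $$ (i, pick J b) \<noteq> 0" using \<open>?B $$ (i, b) \<noteq> 0\<close> B(2) \<open>i < m\<close> \<open>b < m\<close> by simp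
    ultimately show "w (pick J b) < w (pick J (p i))" using dominant \<open>i < m\<close> pick_p by simp
  qed
  also have "(\<Prod>i = 0..<m. ?B $$ (i, p i)) = (\<Prod>i = 0..<m. A $$ (i, \<pi> i))"
  proof (rule prod.cong)
    fix i assume "i \<in> {0..<m}"
    moreover have "p i < m" using calculation permutes_in_image[OF p] by simp
    ultimately show "?B $$ (i, p i) = A $$ (i, \<pi> i)" using B(2) pick_p by simp
  qed simp
  finally show ?thesis using p by blast
qed

lemma basic_mat_if_unit_minor:
  fixes M :: "'a::comm_ring_1 mat"
  assumes "M \<in> carrier_mat m n" and "J \<subseteq> {..<n}" and "card J = m"
    and "det (submatrix M {..<m} J) dvd 1"
  shows "basic_mat M"
  using assms unfolding basic_mat_def by (metis carrier_matD dvd_trans)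

locale leading_columns =
  fixes n :: nat and j d :: "nat \<Rightarrow> nat"
  assumes two_le_n: "n \<ge> 2"
    and j_range: "\<And>i. i \<in> {1..n-1} \<Longrightarrow> j i \<in> {1..n}"
    and inj_j: "inj_on j {1..n-1}"
    and d_pos: "\<And>i. i \<in> {1..n-1} \<Longrightarrow> j i < i \<Longrightarrow> d i > 0"
begin

lemma exists_missing_column: "\<exists>c. {1..n} - j ` {1..n-1} = {c}"
proof -
  have "j ` {1..n-1} \<subseteq> {1..n}" using j_range by auto
  moreover have "card (j ` {1..n-1}) = n - 1" using inj_j by (simp add: card_image)
  ultimately have "card ({1..n} - j ` {1..n-1}) = 1" using two_le_n by (simp add: card_Diff_subset)
  thus ?thesis by (rule card_1_singletonE) blast
qed

definition missing_column :: nat where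
  "missing_column = (THE c. {1..n} - j ` {1..n-1} = {c})"

lemma missing_column: "{1..n} - j ` {1..n-1} = {missing_column}"
proof -
  obtain c where c: "{1..n} - j ` {1..n-1} = {c}" using exists_missing_column by blast
  thus ?thesis unfolding missing_column_def c by simp
qed

definition jperm :: "nat \<Rightarrow> nat" where
  "jperm x = (if x \<in> {1..n-1} then j x else if x = n then missing_column else x)"

lemma jperm_permutes: "jperm permutes {1..n}"
proof (rule bij_imp_permutes)
  have "jperm ` {1..n} \<subseteq> {1..n}" using j_range missing_column unfolding jperm_def by auto
  moreover have "inj_on jperm {1..n}"
  proof -
    have "jperm ` {1..n-1} = j ` {1..n-1}" unfolding jperm_def by simp
    moreover have "inj_on jperm {1..n-1}" using inj_j by (rule inj_on_cong[THEN iffD1, rotated]) (simp add: jperm_def)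
    moreover have "jperm n = missing_column" using two_le_n unfolding jperm_def by auto
    moreover have "{1..n} = insert n {1..n-1}" using two_le_n by auto
    ultimately show ?thesis using missing_column by auto
  qed
  ultimately show "bij_betw jperm {1..n} {1..n}" unfolding bij_betw_def by (simp add: endo_inj_surj)
qed (use two_le_n in \<open>auto simp: jperm_def\<close>)

lemma jperm_eq_j: "i \<in> {1..n-1} \<Longrightarrow> jperm i = j i"
  unfolding jperm_def by simp

lemma permutation_jperm: "permutation jperm"
  using jperm_permutes by (auto simp: permutation_permutes)

lemma self_in_orbit_jperm: "x \<in> orbit jperm x"
  using permutation_jperm by (rule permutation_self_in_orbit)

lemma orbit_jperm_eq: "y \<in> orbit jperm x \<Longrightarrow> orbit jperm y = orbit jperm x"
  using cyclic_on_orbit'[OF permutation_jperm] by (rule orbit_cyclic_eq3)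

lemma orbit_jperm_subset: "x \<in> {1..n} \<Longrightarrow> orbit jperm x \<subseteq> {1..n}"
  using jperm_permutes by (rule permutes_orbit_subset)

lemma orbit_jperm_conv_funpow: "orbit jperm x = range (\<lambda>k. (jperm ^^ k) x)"
  using orbit_altdef_permutation[OF permutation_jperm] by auto

text \<open>Every cycle of \<open>jperm\<close> avoiding \<open>n\<close> is represented by its largest element, except a fixed
  point \<open>i = j i\<close> with \<open>d i = 0\<close>, whose row is just \<open>e\<^sub>i\<close>.\<close>
definition cycle_tops :: "nat set" where
  "cycle_tops = {i \<in> {1..n-1}. (\<forall>y \<in> orbit jperm i. y \<le> i) \<and> \<not> (j i = i \<and> d i = 0)}"

definition anchors :: "nat set" where
  "anchors = insert n cycle_tops"

lemma cycle_top_props: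
  assumes "i \<in> cycle_tops"
  shows "i \<in> {1..n-1}" and "\<And>y. y \<in> orbit jperm i \<Longrightarrow> y \<le> i" and "j i \<le> i" and "d i > 0"
proof -
  show i: "i \<in> {1..n-1}" and top: "\<And>y. y \<in> orbit jperm i \<Longrightarrow> y \<le> i"
    using assms unfolding cycle_tops_def by auto
  show "j i \<le> i" using top[OF orbit.base] jperm_eq_j[OF i] by simp
  with i show "d i > 0" using d_pos[OF i] assms unfolding cycle_tops_def by fastforce
qed

lemma anchors_subset: "anchors \<subseteq> {1..n}"
  using cycle_top_props(1) two_le_n unfolding anchors_def by fastforce

lemma finite_anchors: "finite anchors"
  using anchors_subset finite_subset by blast

lemma orbit_jperm_fixed: "i \<in> {1..n-1} \<Longrightarrow> j i = i \<Longrightarrow> orbit jperm i = {i}"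
  by (simp add: orbit_eq_singleton_iff jperm_eq_j)

lemma fixed_point_not_top:
  assumes "i \<in> {1..n-1}" and "i \<notin> cycle_tops" and "j i = i"
  shows "d i = 0"
  using assms orbit_jperm_fixed[of i] unfolding cycle_tops_def by auto

lemma reaches_anchor:
  assumes x: "x \<in> {1..n}" and not_trivial: "\<not> (x \<in> {1..n-1} \<and> j x = x \<and> d x = 0)"
  shows "\<exists>k. (jperm ^^ k) x \<in> anchors"
proof (cases "n \<in> orbit jperm x")
  case True
  thus ?thesis unfolding orbit_jperm_conv_funpow anchors_def by (auto dest: sym)
next
  case False
  let ?m = "Max (orbit jperm x)"
  have "finite (orbit jperm x)" using orbit_jperm_subset[OF x] finite_subset by blast
  hence m: "?m \<in> orbit jperm x" and top: "\<And>y. y \<in> orbit jperm x \<Longrightarrow> y \<le> ?m"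
    using self_in_orbit_jperm[of x] by (auto intro: Max_in)
  have orbit_m: "orbit jperm ?m = orbit jperm x" using orbit_jperm_eq[OF m] .
  have "?m \<in> {1..n}" using m orbit_jperm_subset[OF x] by blast
  hence m_range: "?m \<in> {1..n-1}" using m False by (cases "?m = n") auto
  have "\<not> (j ?m = ?m \<and> d ?m = 0)"
  proof
    assume "j ?m = ?m \<and> d ?m = 0"
    hence "orbit jperm x = {?m}" using m_range orbit_jperm_fixed orbit_m by simp
    hence "x = ?m" using self_in_orbit_jperm[of x] by blast
    with m_range \<open>j ?m = ?m \<and> d ?m = 0\<close> not_trivial show False by simp
  qed
  hence "?m \<in> cycle_tops" using m_range top orbit_m unfolding cycle_tops_def by auto
  thus ?thesis using m unfolding orbit_jperm_conv_funpow anchors_def by auto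
qed

definition next_anchor :: "nat \<Rightarrow> nat" where
  "next_anchor i = Min {a \<in> anchors. i < a}"

lemma next_anchor_props:
  assumes "i \<in> cycle_tops"
  shows "next_anchor i \<in> anchors" and "i < next_anchor i"
    and "\<And>a. a \<in> anchors \<Longrightarrow> i < a \<Longrightarrow> next_anchor i \<le> a"
proof -
  have "n \<in> {a \<in> anchors. i < a}" using cycle_top_props(1)[OF assms] two_le_n unfolding anchors_def by auto
  hence "next_anchor i \<in> {a \<in> anchors. i < a}"
    unfolding next_anchor_def using finite_anchors by (intro Min_in) auto
  thus "next_anchor i \<in> anchors" and "i < next_anchor i" by auto
  show "\<And>a. a \<in> anchors \<Longrightarrow> i < a \<Longrightarrow> next_anchor i \<le> a"
    unfolding next_anchor_def using finite_anchors by simp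
qed

text \<open>The first anchor met when following \<open>jperm\<close>, and the number of steps; junk unless
  \<open>\<exists>k. (jperm ^^ k) x \<in> anchors\<close>.\<close>
definition anchor_dist :: "nat \<Rightarrow> nat" where
  "anchor_dist x = (LEAST k. (jperm ^^ k) x \<in> anchors)"

definition anchor :: "nat \<Rightarrow> nat" where
  "anchor x = (jperm ^^ anchor_dist x) x"

lemma anchor_in: "\<exists>k. (jperm ^^ k) x \<in> anchors \<Longrightarrow> anchor x \<in> anchors \<and> anchor x \<in> orbit jperm x"
  unfolding anchor_def anchor_dist_def orbit_jperm_conv_funpow by (auto intro: LeastI_ex)

lemma anchor_of_anchor: "a \<in> anchors \<Longrightarrow> anchor_dist a = 0 \<and> anchor a = a"
  unfolding anchor_dist_def anchor_def by (auto intro: Least_eq_0)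

lemma anchor_step:
  assumes "x \<notin> anchors" and "\<exists>k. (jperm ^^ k) x \<in> anchors"
  shows "anchor (jperm x) = anchor x \<and> anchor_dist (jperm x) < anchor_dist x"
proof -
  have shift: "(jperm ^^ Suc k) x = (jperm ^^ k) (jperm x)" for k by (simp only: funpow_Suc_right comp_apply)
  obtain k where "(jperm ^^ k) x \<in> anchors" using assms(2) ..
  moreover have "\<not> (jperm ^^ 0) x \<in> anchors" using assms(1) by simp
  ultimately have "anchor_dist x = Suc (LEAST k. (jperm ^^ Suc k) x \<in> anchors)"
    unfolding anchor_dist_def by (rule Least_Suc[where P = "\<lambda>k. (jperm ^^ k) x \<in> anchors"])
  moreover have "anchor_dist (jperm x) = (LEAST k. (jperm ^^ Suc k) x \<in> anchors)"
    unfolding anchor_dist_def shift ..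
  ultimately show ?thesis unfolding anchor_def by (simp add: funpow_swap1)
qed

text \<open>A cycle top is the only anchor on its cycle, so it is the anchor of its successor.\<close>
lemma anchor_j_cycle_top:
  assumes i: "i \<in> cycle_tops"
  shows "anchor (j i) = i"
proof -
  note top = cycle_top_props[OF i]
  have j_in: "j i \<in> orbit jperm i" using orbit.base[of jperm i] jperm_eq_j[OF top(1)] by simp
  have orbit_j: "orbit jperm (j i) = orbit jperm i" using orbit_jperm_eq[OF j_in] .
  have "i \<in> orbit jperm (j i)" using orbit_j self_in_orbit_jperm by simp
  then obtain k where "(jperm ^^ k) (j i) = i" unfolding orbit_jperm_conv_funpow by (metis rangeE)
  hence "\<exists>k. (jperm ^^ k) (j i) \<in> anchors" using i unfolding anchors_def by (intro exI[of _ k]) simp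
  then have a: "anchor (j i) \<in> anchors" "anchor (j i) \<in> orbit jperm i"
    using anchor_in orbit_j by auto
  hence "anchor (j i) \<le> i" using top(2) by blast
  hence a_top: "anchor (j i) \<in> cycle_tops" using a(1) top(1) unfolding anchors_def by auto
  have "i \<in> orbit jperm (anchor (j i))" using orbit_jperm_eq[OF a(2)] self_in_orbit_jperm by simp
  hence "i \<le> anchor (j i)" by (rule cycle_top_props(2)[OF a_top])
  with \<open>anchor (j i) \<le> i\<close> show ?thesis by simp
qed

text \<open>Row \<open>i\<close> is \<open>t\<^sup>d\<^sup>i e\<^bsub>j i\<^esub> + e\<^sub>i\<close>, plus \<open>e\<^bsub>next_anchor i\<^esub>\<close> for a cycle top;
  the summand \<open>e\<^sub>i\<close> is dropped when \<open>j i = i\<close> and \<open>d i = 0\<close>, where \<open>t\<^sup>0\<close> already provides it.\<close>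
definition entry :: "nat \<Rightarrow> nat \<Rightarrow> 'a::field poly" where
  "entry i k = (if k = j i then monom 1 (d i) else 0)
     + (if k = i \<and> \<not> (j i = i \<and> d i = 0) then 1 else 0)
     + (if i \<in> cycle_tops \<and> k = next_anchor i then 1 else 0)"

definition pivot :: "nat \<Rightarrow> nat" where
  "pivot i = (if i \<in> cycle_tops then next_anchor i else i)"

lemma next_anchor_ne: "i \<in> cycle_tops \<Longrightarrow> next_anchor i \<noteq> i \<and> next_anchor i \<noteq> j i"
  using next_anchor_props(2) cycle_top_props(3) by fastforce

lemma entry_j: "entry i (j i) = monom 1 (d i) + (if j i = i \<and> d i > 0 then 1 else 0)"
  unfolding entry_def using next_anchor_ne[of i] by auto

lemma entry_other:
  "k \<noteq> j i \<Longrightarrow> entry i k = (if k = i \<or> (i \<in> cycle_tops \<and> k = next_anchor i) then 1 else 0)"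
  unfolding entry_def using next_anchor_ne[of i] by auto

lemma entry_nonzero: "entry i k \<noteq> 0 \<Longrightarrow> k = j i \<or> k = i \<or> (i \<in> cycle_tops \<and> k = next_anchor i)"
  unfolding entry_def by (auto split: if_splits)

lemma entry_pivot:
  assumes "i \<in> {1..n-1}"
  shows "entry i (pivot i) = 1"
proof (cases "i \<in> cycle_tops")
  case True
  thus ?thesis unfolding pivot_def using entry_other[of "next_anchor i" i] next_anchor_ne[OF True] by simp
next
  case False
  show ?thesis
  proof (cases "j i = i")
    case True
    with assms False have "d i = 0" by (rule fixed_point_not_top)
    with True False show ?thesis unfolding pivot_def using entry_j[of i] by simp
  next
    case False
    with \<open>i \<notin> cycle_tops\<close> show ?thesis unfolding pivot_def using entry_other[of i i] by auto
  qed
qed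

lemma Min_anchors_in: "Min anchors \<in> anchors"
  using finite_anchors unfolding anchors_def by (intro Min_in) auto

lemma pivot_range:
  assumes "i \<in> {1..n-1}"
  shows "pivot i \<in> {1..n} - {Min anchors}"
proof (cases "i \<in> cycle_tops")
  case True
  have "Min anchors \<le> i" using True finite_anchors unfolding anchors_def by simp
  thus ?thesis using True next_anchor_props(1,2) anchors_subset unfolding pivot_def by fastforce
next
  case False
  note Min_anchors_in
  moreover have "i \<notin> anchors" using assms False unfolding anchors_def by auto
  ultimately show ?thesis using assms False unfolding pivot_def by auto
qed

lemma inj_pivot: "inj_on pivot {1..n-1}"
proof (rule inj_onI)
  fix x y assume x: "x \<in> {1..n-1}" and y: "y \<in> {1..n-1}" and eq: "pivot x = pivot y"
  have pivot_anchor: "pivot z \<in> anchors \<longleftrightarrow> z \<in> cycle_tops" if "z \<in> {1..n-1}" for z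
    using that next_anchor_props(1) unfolding pivot_def anchors_def by auto
  have tops_le: "x = y" if "x \<in> cycle_tops" "y \<in> cycle_tops" "x \<le> y" "pivot x = pivot y" for x y
  proof (rule ccontr)
    assume "x \<noteq> y"
    hence "next_anchor x \<le> y" using that next_anchor_props(3)[of x y] unfolding anchors_def by auto
    thus False using that next_anchor_props(2)[of y] unfolding pivot_def by simp
  qed
  show "x = y"
  proof (cases "x \<in> cycle_tops")
    case True
    hence "y \<in> cycle_tops" using pivot_anchor x y eq by metis
    with True eq show ?thesis using tops_le[of x y] tops_le[of y x] by linarith
  next
    case False
    hence "y \<notin> cycle_tops" using pivot_anchor x y eq by metis
    with False eq show ?thesis unfolding pivot_def by simp
  qed
qed

definition weight :: "nat \<Rightarrow> nat \<times> nat" where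
  "weight k = (anchor k, anchor_dist k)"

lemma entry_dominated:
  assumes i: "i \<in> {1..n-1}" and "entry i k \<noteq> 0" and "k \<noteq> pivot i"
  shows "weight k < weight (pivot i)"
proof (cases "i \<in> cycle_tops")
  case True
  have "i \<in> anchors" using True unfolding anchors_def by simp
  hence "anchor k = i" if "k = i" using that anchor_of_anchor by simp
  moreover have "anchor k = i" if "k = j i" using that anchor_j_cycle_top[OF True] by simp
  ultimately have "anchor k = i"
    using entry_nonzero[OF \<open>entry i k \<noteq> 0\<close>] \<open>k \<noteq> pivot i\<close> True unfolding pivot_def by auto
  moreover have "weight (pivot i) = (next_anchor i, 0)"
    using True anchor_of_anchor[OF next_anchor_props(1)] unfolding pivot_def weight_def by simp
  ultimately show ?thesis using next_anchor_props(2)[OF True] unfolding weight_def by simp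
next
  case False
  hence k: "k = j i" and "j i \<noteq> i"
    using entry_nonzero[OF \<open>entry i k \<noteq> 0\<close>] \<open>k \<noteq> pivot i\<close> unfolding pivot_def by auto
  have "i \<notin> anchors" using i False unfolding anchors_def by auto
  moreover have "\<exists>k. (jperm ^^ k) i \<in> anchors" using i \<open>j i \<noteq> i\<close> by (intro reaches_anchor) auto
  ultimately show ?thesis
    using anchor_step[of i] False jperm_eq_j[OF i] unfolding k pivot_def weight_def by simp
qed

lemma shifted_pivot:
  assumes "a < n - 1"
  shows "pivot (a+1) - 1 \<in> {..<n} - {Min anchors - 1}" and "pivot (a+1) - 1 + 1 = pivot (a+1)"
proof -
  have "pivot (a+1) \<in> {1..n} - {Min anchors}" using assms by (intro pivot_range) auto
  moreover have "Min anchors \<in> {1..n}" using Min_anchors_in anchors_subset by blast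
  ultimately show "pivot (a+1) - 1 \<in> {..<n} - {Min anchors - 1}" and "pivot (a+1) - 1 + 1 = pivot (a+1)"
    by auto
qed

lemma inj_shifted_pivot: "inj_on (\<lambda>a. pivot (a+1) - 1) {..<n-1}"
proof (rule inj_onI)
  fix a b assume a: "a \<in> {..<n-1}" and b: "b \<in> {..<n-1}" and "pivot (a+1) - 1 = pivot (b+1) - 1"
  hence "pivot (a+1) = pivot (b+1)" using shifted_pivot(2) by (metis lessThan_iff)
  moreover have "a + 1 \<in> {1..n-1}" "b + 1 \<in> {1..n-1}" using a b by auto
  ultimately show "a = b" using inj_pivot by (auto dest: inj_onD)
qed

definition witness :: "'a::field poly mat" where
  "witness = mat (n-1) n (\<lambda>(a, b). entry (a+1) (b+1))"

lemma witness_carrier: "witness \<in> carrier_mat (n-1) n"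
  unfolding witness_def by simp

lemma witness_index: "i \<in> {1..n-1} \<Longrightarrow> k \<in> {1..n} \<Longrightarrow> witness $$ (i-1, k-1) = entry i k"
  unfolding witness_def by auto

lemma basic_witness: "basic_mat (witness :: 'a::field poly mat)"
proof -
  let ?M = "witness :: 'a poly mat"
  let ?J = "{..<n} - {Min anchors - 1}" and ?\<pi> = "\<lambda>a. pivot (a+1) - 1"
  have row: "a + 1 \<in> {1..n-1}" if "a < n - 1" for a using that by auto
  have index: "?M $$ (a, k) = entry (a+1) (k+1)" if "a < n - 1" "k < n" for a k
    using that unfolding witness_def by simp
  have "Min anchors \<in> {1..n}" using Min_anchors_in anchors_subset by blast
  hence J: "?J \<subseteq> {..<n}" "card ?J = n - 1" by auto
  have "?\<pi> ` {..<n-1} \<subseteq> ?J" using shifted_pivot(1) by auto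
  moreover have "weight (k+1) < weight (?\<pi> a + 1)"
    if "a < n - 1" "k \<in> ?J" "?M $$ (a, k) \<noteq> 0" "k \<noteq> ?\<pi> a" for a k
  proof -
    have "(entry (a+1) (k+1) :: 'a poly) \<noteq> 0" using that index by simp
    moreover have "k + 1 \<noteq> pivot (a+1)" using that(4) shifted_pivot(2)[OF that(1)] by simp
    ultimately show ?thesis using entry_dominated[OF row[OF that(1)]] shifted_pivot(2)[OF that(1)] by simp
  qed
  ultimately obtain p
    where "det (submatrix ?M {..<n-1} ?J) = signof p * (\<Prod>a = 0..<n-1. ?M $$ (a, ?\<pi> a))"
    using det_submatrix_eq_dominant_injection[OF witness_carrier J inj_shifted_pivot,
        where w = "\<lambda>k. weight (k+1)"] by blast
  also have "(\<Prod>a = 0..<n-1. ?M $$ (a, ?\<pi> a)) = 1"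
  proof (rule prod.neutral, rule ballI)
    fix a assume "a \<in> {0..<n-1}"
    hence "a < n - 1" and "?\<pi> a < n" using shifted_pivot(1)[of a] by auto
    thus "?M $$ (a, ?\<pi> a) = 1" using index shifted_pivot(2) entry_pivot[OF row] by simp
  qed
  finally have "det (submatrix ?M {..<n-1} ?J) * signof p = 1"
    by (simp flip: of_int_mult)
  hence "det (submatrix ?M {..<n-1} ?J) dvd 1" by (metis dvdI)
  with witness_carrier J show ?thesis by (rule basic_mat_if_unit_minor)
qed

lemma degree_entry_other: "k \<noteq> j i \<Longrightarrow> degree (entry i k) = 0"
  by (simp add: entry_other)

lemma degree_entry_j: "degree (entry i (j i)) = d i"
  unfolding entry_j by (simp add: degree_add_eq_left degree_monom_eq)

lemma entry_j_nonzero: "(entry i (j i) :: 'a::field poly) \<noteq> 0"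
proof (cases "d i = 0")
  case True
  thus ?thesis by (simp add: entry_j)
next
  case False
  thus ?thesis using degree_entry_j[of i, where 'a = 'a] by auto
qed

lemma entry_after_j:
  assumes "i \<in> {1..n-1}" and "j i < k"
  shows "(entry i k :: 'a::field poly) = 0 \<or> degree (entry i k :: 'a poly) < d i"
proof (cases "(entry i k :: 'a poly) = 0")
  case False
  hence "k = i \<or> i \<in> cycle_tops" using entry_nonzero assms(2) by blast
  hence "d i > 0" using d_pos[OF assms(1)] assms(2) cycle_top_props(4) by auto
  thus ?thesis using assms(2) by (simp add: degree_entry_other)
qed simp

lemma poly_entry_diagonal:
  assumes "i \<in> {1..n-1}"
  shows "poly (entry i i :: 'a::field poly) 0 = 1"
proof (cases "j i = i")
  case True
  thus ?thesis using entry_j[of i, where 'a = 'a] by (simp add: poly_monom zero_power)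
next
  case False
  thus ?thesis by (simp add: entry_other)
qed

lemma poly_entry_below_diagonal:
  assumes "i \<in> {1..n-1}" and "k < i"
  shows "poly (entry i k) 0 = 0"
proof (cases "k = j i")
  case True
  thus ?thesis using d_pos[OF assms(1)] assms(2) by (simp add: entry_j poly_monom zero_power)
next
  case False
  have "\<not> (i \<in> cycle_tops \<and> k = next_anchor i)" using next_anchor_props(2) assms(2) by fastforce
  thus ?thesis using False assms(2) by (simp add: entry_other)
qed

end

theorem theorem4p7:
  fixes n :: nat and j d :: "nat \<Rightarrow> nat"
  assumes "n \<ge> 2"
    and "\<And>i. i \<in> {1..n-1} \<Longrightarrow> j i \<in> {1..n}"
    and "inj_on j {1..n-1}"
    and "\<And>i. i \<in> {1..n-1} \<Longrightarrow> j i < i \<Longrightarrow> d i > 0"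
  shows "\<exists>M :: ('a::{field,finite}) poly mat.
           M \<in> carrier_mat (n-1) n \<and> basic_mat M \<and>
           (\<forall>i\<in>{1..n-1}.
              (\<forall>k\<in>{1..n}. k < j i \<longrightarrow> degree (M $$ (i-1, k-1)) \<le> d i) \<and>
              M $$ (i-1, j i - 1) \<noteq> 0 \<and> degree (M $$ (i-1, j i - 1)) = d i \<and>
              (\<forall>k\<in>{1..n}. k > j i \<longrightarrow>
                  M $$ (i-1, k-1) = 0 \<or> degree (M $$ (i-1, k-1)) < d i) \<and>
              poly (M $$ (i-1, i-1)) 0 = 1 \<and>
              (\<forall>k\<in>{1..n}. k < i \<longrightarrow> poly (M $$ (i-1, k-1)) 0 = 0))"
proof -
  interpret leading_columns n j d using assms by unfold_locales auto
  let ?M = "witness :: 'a poly mat"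
  show ?thesis
  proof (intro exI[of _ ?M] conjI ballI impI)
    fix i assume i: "i \<in> {1..n-1}"
    have "j i \<in> {1..n}" "i \<in> {1..n}" using assms(2)[OF i] i by auto
    note index = witness_index[OF i this(1)] witness_index[OF i this(2)]
    show "?M $$ (i-1, j i - 1) \<noteq> 0" "degree (?M $$ (i-1, j i - 1)) = d i"
      unfolding index by (simp_all add: entry_j_nonzero degree_entry_j)
    show "poly (?M $$ (i-1, i-1)) 0 = 1" unfolding index by (rule poly_entry_diagonal[OF i])
    fix k assume k: "k \<in> {1..n}"
    note index = witness_index[OF i k]
    show "k < j i \<Longrightarrow> degree (?M $$ (i-1, k-1)) \<le> d i"
      unfolding index by (simp add: degree_entry_other)
    show "j i < k \<Longrightarrow> ?M $$ (i-1, k-1) = 0 \<or> degree (?M $$ (i-1, k-1)) < d i"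
      unfolding index by (rule entry_after_j[OF i])
    show "k < i \<Longrightarrow> poly (?M $$ (i-1, k-1)) 0 = 0"
      unfolding index by (rule poly_entry_below_diagonal[OF i])
  qed (use witness_carrier basic_witness in auto)
qed

end
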